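(* Let $\Sigma$ be an alphabet with $|\Sigma|=3$. For every antimorphic involution $\theta$ on $\Sigma^*$, there exists an infinite word over $\Sigma$ that is pseudo-cube-free with respect to $\theta$.
   Context: A function $\theta:\Sigma^*\to\Sigma^*$ is an antimorphic involution if $\theta(uv)=\theta(v)\theta(u)$ and $\theta(\theta(w))=w$. A pseudo cube with respect to $\theta$ is a nonempty word $u_1u_2u_3$ such that for all $1\le i,j\le 3$, $u_i=u_j$ or $u_i=\theta(u_j)$. A word is pseudo-cube-free with respect to $\theta$ if no factor (contiguous subword) of it is a pseudo cube. *)

theory Defs
  imports Main
begin

definition antimorphic_involution :: "('a list \<Rightarrow> 'a list) \<Rightarrow> bool" where
  "antimorphic_involution \<theta> \<longleftrightarrow>
     (\<forall>u v. \<theta> (u @ v) = \<theta> v @ \<theta> u) \<and> (\<forall>w. \<theta> (\<theta> w) = w)"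

definition pseudo_cube :: "('a list \<Rightarrow> 'a list) \<Rightarrow> 'a list \<Rightarrow> bool" where
  "pseudo_cube \<theta> w \<longleftrightarrow> w \<noteq> [] \<and>
     (\<exists>u1 u2 u3. w = u1 @ u2 @ u3 \<and>
        (\<forall>x\<in>{u1, u2, u3}. \<forall>y\<in>{u1, u2, u3}. x = y \<or> x = \<theta> y))"

definition pseudo_cube_free_inf :: "('a list \<Rightarrow> 'a list) \<Rightarrow> (nat \<Rightarrow> 'a) \<Rightarrow> bool" where
  "pseudo_cube_free_inf \<theta> w \<longleftrightarrow> (\<forall>i j. \<not> pseudo_cube \<theta> (map w [i..<j]))"

end

theory Submission
  imports Defs
begin

text \<open>An antimorphic involution is \<open>w \<mapsto> rev (map g w)\<close> for an involution \<open>g\<close> of the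
  alphabet; on three letters \<open>g\<close> fixes some letter \<open>c\<close>. Put \<open>c\<close> at the even positions and
  the Thue--Morse word over the two other letters at the odd positions. Since exactly one of
  \<open>x\<close> and \<open>g x\<close> is \<open>c\<close> and consecutive positions differ in parity, no factor has the form
  \<open>x (g x)\<close>; this rules out \<open>u\<^sub>2 = \<theta> u\<^sub>1\<close> and \<open>u\<^sub>3 = \<theta> u\<^sub>2\<close> at the junctions, so a
  pseudo cube would be an ordinary cube. A cube of odd period clashes with the parity of the
  \<open>c\<close>'s, and one of even period \<open>2m\<close> yields a cube of period \<open>m\<close> in the Thue--Morse word.\<close>

definition cube_at :: "(nat \<Rightarrow> 'a) \<Rightarrow> nat \<Rightarrow> nat \<Rightarrow> bool" where
  "cube_at w i k \<longleftrightarrow> 0 < k \<and> (\<forall>r < 2 * k. w (i + r) = w (i + r + k))"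

lemma cube_at_of_map_upt:
  assumes "map w [i..<j] = u @ u @ u" and "u \<noteq> []"
  shows "cube_at w i (length u)"
  unfolding cube_at_def
proof (intro conjI allI impI)
  show "0 < length u" using assms(2) by simp
  fix r assume r: "r < 2 * length u"
  have len: "j - i = 3 * length u" using arg_cong[OF assms(1), of length] by simp
  have "(u @ u @ u) ! r = (u @ u) ! r"
    using r by (simp add: nth_append)
  moreover have "(u @ u @ u) ! (r + length u) = (u @ u) ! r"
    using nth_append_length_plus[of u "u @ u" r] by (simp add: add.commute)
  ultimately have "map w [i..<j] ! r = map w [i..<j] ! (r + length u)"
    using assms(1) by simp
  with r len show "w (i + r) = w (i + r + length u)"
    by (simp add: add.assoc)
qed

lemma cube_at_periodic:
  assumes "cube_at w i k" and "i \<le> p" and "p < i + 2 * k"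
  shows "w p = w (p + k)"
proof -
  obtain d where p: "p = i + d" using assms(2) le_Suc_ex by blast
  with assms(3) have "d < 2 * k" by simp
  with assms(1) have "w (i + d) = w (i + d + k)" unfolding cube_at_def by blast
  with p show ?thesis by simp
qed

subsection \<open>The Thue--Morse word is cube-free\<close>

fun thue_morse :: "nat \<Rightarrow> bool" where
  "thue_morse n =
     (if n = 0 then False else if even n then thue_morse (n div 2) else \<not> thue_morse (n div 2))"

declare thue_morse.simps[simp del]

lemma thue_morse_double: "thue_morse (2 * n) = thue_morse n"
  by (cases "n = 0") (simp_all add: thue_morse.simps[of "2 * n"] thue_morse.simps[of 0])

lemma thue_morse_double_Suc: "thue_morse (2 * n + 1) = (\<not> thue_morse n)"
  using thue_morse.simps[of "2 * n + 1"] by simp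

lemma thue_morse_not_three_equal:
  "\<not> (thue_morse n = thue_morse (n + 1) \<and> thue_morse (n + 1) = thue_morse (n + 2))"
proof (cases "even n")
  case True
  then obtain m where "n = 2 * m" by blast
  then show ?thesis using thue_morse_double[of m] thue_morse_double_Suc[of m] by auto
next
  case False
  then obtain m where "n = 2 * m + 1" using oddE by blast
  then have "n + 1 = 2 * (m + 1)" "n + 2 = 2 * (m + 1) + 1" by auto
  then show ?thesis
    using thue_morse_double[of "m + 1"] thue_morse_double_Suc[of "m + 1"] by auto
qed

lemma thue_morse_cube_at_half:
  assumes "cube_at thue_morse i (2 * m)"
  shows "cube_at thue_morse ((i + 1) div 2) m"
  unfolding cube_at_def
proof (intro conjI allI impI)
  show "0 < m" using assms by (simp add: cube_at_def)
  fix r assume "r < 2 * m"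
  define s where "s = (i + 1) div 2"
  have s: "i \<le> 2 * s" "2 * s \<le> i + 1" unfolding s_def by presburger+
  have "thue_morse (s + r) = thue_morse (2 * (s + r))" by (rule thue_morse_double[symmetric])
  also have "\<dots> = thue_morse (2 * (s + r) + 2 * m)"
    by (rule cube_at_periodic[OF assms]) (use s \<open>r < 2 * m\<close> in presburger)+
  also have "2 * (s + r) + 2 * m = 2 * (s + r + m)" by simp
  also have "thue_morse \<dots> = thue_morse (s + r + m)" by (rule thue_morse_double)
  finally show "thue_morse ((i + 1) div 2 + r) = thue_morse ((i + 1) div 2 + r + m)"
    unfolding s_def .
qed

lemma thue_morse_no_cube_at_odd:
  assumes "1 \<le> r"
  shows "\<not> cube_at thue_morse i (2 * r + 1)"
proof
  assume cube: "cube_at thue_morse i (2 * r + 1)"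
  have step: "thue_morse (n + r) = thue_morse (n + r + 1)"
    if "i \<le> 2 * n" "2 * n + 1 < i + 2 * (2 * r + 1)" for n
  proof -
    have "thue_morse n = thue_morse (2 * n)" by (rule thue_morse_double[symmetric])
    also have "\<dots> = thue_morse (2 * n + (2 * r + 1))"
      using that by (intro cube_at_periodic[OF cube]) simp_all
    also have "2 * n + (2 * r + 1) = 2 * (n + r) + 1" by simp
    also have "thue_morse \<dots> = (\<not> thue_morse (n + r))" by (rule thue_morse_double_Suc)
    finally have even_pos: "thue_morse n = (\<not> thue_morse (n + r))" .
    have "(\<not> thue_morse n) = thue_morse (2 * n + 1)" by (rule thue_morse_double_Suc[symmetric])
    also have "\<dots> = thue_morse (2 * n + 1 + (2 * r + 1))"
      using that by (intro cube_at_periodic[OF cube]) simp_all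
    also have "2 * n + 1 + (2 * r + 1) = 2 * (n + r + 1)" by simp
    also have "thue_morse \<dots> = thue_morse (n + r + 1)" by (rule thue_morse_double)
    finally have odd_pos: "(\<not> thue_morse n) = thue_morse (n + r + 1)" .
    from even_pos odd_pos show ?thesis by blast
  qed
  define n where "n = (i + 1) div 2"
  have n: "i \<le> 2 * n" "2 * n \<le> i + 1" unfolding n_def by presburger+
  have "thue_morse (n + r) = thue_morse (n + r + 1)"
    by (rule step) (use n assms in presburger)+
  moreover have "thue_morse (n + 1 + r) = thue_morse (n + 1 + r + 1)"
    by (rule step) (use n assms in presburger)+
  ultimately show False
    using thue_morse_not_three_equal[of "n + r"] by (simp add: ac_simps)
qed

theorem thue_morse_cube_free: "\<not> cube_at thue_morse i k"
proof (induction k arbitrary: i rule: less_induct)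
  case (less k)
  show ?case
  proof
    assume cube: "cube_at thue_morse i k"
    then have "0 < k" by (simp add: cube_at_def)
    have "k = 1 \<or> (\<exists>m. k = 2 * m \<and> 0 < m) \<or> (\<exists>r. k = 2 * r + 1 \<and> 1 \<le> r)"
      using \<open>0 < k\<close> by presburger
    then consider "k = 1" | m where "k = 2 * m" "0 < m" | r where "k = 2 * r + 1" "1 \<le> r"
      by blast
    then show False
    proof cases
      case 1
      have per: "thue_morse (i + r) = thue_morse (i + r + 1)" if "r < 2" for r
        using cube 1 that unfolding cube_at_def by simp
      show False using per[of 0] per[of 1] thue_morse_not_three_equal[of i] by simp
    next
      case 2
      then show False
        using less.IH[of m "(i + 1) div 2"] thue_morse_cube_at_half[of i m] cube by simp
    next
      case 3
      then show False using cube thue_morse_no_cube_at_odd by simp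
    qed
  qed
qed

subsection \<open>Antimorphic involutions act letter by letter\<close>

lemma antimorphic_involution_Nil:
  assumes "antimorphic_involution \<theta>"
  shows "\<theta> [] = []"
proof -
  have "\<theta> [] = \<theta> [] @ \<theta> []"
    using assms unfolding antimorphic_involution_def by (metis append_Nil)
  then show ?thesis by (metis append_self_conv)
qed

lemma antimorphic_involution_length:
  assumes "antimorphic_involution \<theta>"
  shows "length (\<theta> w) = length w"
proof -
  have app: "\<And>u v. \<theta> (u @ v) = \<theta> v @ \<theta> u" and inv: "\<And>w. \<theta> (\<theta> w) = w"
    using assms unfolding antimorphic_involution_def by auto
  have letter: "\<theta> [x] \<noteq> []" for x
    using inv[of "[x]"] antimorphic_involution_Nil[OF assms] by auto
  have ge: "length v \<le> length (\<theta> v)" for v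
  proof (induction v)
    case Nil
    then show ?case by simp
  next
    case (Cons x v)
    have "\<theta> (x # v) = \<theta> v @ \<theta> [x]" using app[of "[x]" v] by simp
    with Cons letter[of x] show ?case by (cases "\<theta> [x]") auto
  qed
  show ?thesis using ge[of w] ge[of "\<theta> w"] inv[of w] by simp
qed

lemma antimorphic_involution_letterwise:
  assumes "antimorphic_involution \<theta>"
  obtains g where "\<And>w. \<theta> w = rev (map g w)" and "\<And>x. g (g x) = x"
proof -
  have app: "\<And>u v. \<theta> (u @ v) = \<theta> v @ \<theta> u" and inv: "\<And>w. \<theta> (\<theta> w) = w"
    using assms unfolding antimorphic_involution_def by auto
  define g where "g x = hd (\<theta> [x])" for x
  have letter: "\<theta> [x] = [g x]" for x
    using antimorphic_involution_length[OF assms, of "[x]"] unfolding g_def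
    by (cases "\<theta> [x]") auto
  have letterwise: "\<theta> w = rev (map g w)" for w
  proof (induction w)
    case Nil
    then show ?case using antimorphic_involution_Nil[OF assms] by simp
  next
    case (Cons x w)
    then show ?case using app[of "[x]" w] letter[of x] by simp
  qed
  moreover have "g (g x) = x" for x
    using inv[of "[x]"] by (simp add: letterwise)
  ultimately show thesis by (rule that)
qed

lemma involution_fixed_point_if_odd_card:
  assumes "finite A" and "odd (card A)" and "g ` A \<subseteq> A" and "\<And>x. x \<in> A \<Longrightarrow> g (g x) = x"
  shows "\<exists>x\<in>A. g x = x"
  using assms
proof (induction "card A" arbitrary: A rule: less_induct)
  case less
  obtain x where x: "x \<in> A" using less.prems(2) by fastforce
  show ?case
  proof (cases "g x = x")
    case True
    with x show ?thesis by blast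
  next
    case False
    define B where "B = A - {x, g x}"
    have "{x, g x} \<subseteq> A" "card {x, g x} = 2"
      using x less.prems(3) False by auto
    then have "card B = card A - 2" "2 \<le> card A"
      unfolding B_def using less.prems(1) by (metis card_Diff_subset finite_subset, metis card_mono)
    then have "card B < card A" "odd (card B)" using less.prems(2) by auto
    moreover have "g ` B \<subseteq> B"
    proof
      fix z assume "z \<in> g ` B"
      then obtain y where "y \<in> B" "z = g y" by blast
      then have "y \<in> A" "y \<noteq> x" "y \<noteq> g x" unfolding B_def by auto
      then have "g y \<in> A" "g y \<noteq> g x" "g y \<noteq> x"
        using less.prems(3,4) x by (auto, metis+)
      then show "z \<in> B" unfolding B_def using \<open>z = g y\<close> by simp
    qed
    ultimately have "\<exists>y\<in>B. g y = y"
      using less.hyps[of B] less.prems(1,4) unfolding B_def by auto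
    then show ?thesis unfolding B_def by blast
  qed
qed

subsection \<open>Pseudo cubes without a factor \<open>x (g x)\<close>\<close>

lemma append_rev_map_eq_reflected_pair:
  assumes "u \<noteq> []"
  shows "u @ rev (map g u) @ z = butlast u @ last u # g (last u) # rev (map g (butlast u)) @ z"
proof -
  have "u = butlast u @ [last u]" using assms by simp
  then have "u @ rev (map g u) @ z =
      butlast u @ [last u] @ rev (map g (butlast u @ [last u])) @ z"
    by (metis append.assoc)
  then show ?thesis by simp
qed

lemma pseudo_cube_is_cube:
  assumes letterwise: "\<And>v. \<theta> v = rev (map g v)"
    and "pseudo_cube \<theta> w"
    and no_pair: "\<And>p x q. w \<noteq> p @ x # g x # q"
  shows "\<exists>u. u \<noteq> [] \<and> w = u @ u @ u"
proof -
  obtain u\<^sub>1 u\<^sub>2 u\<^sub>3 where w: "w = u\<^sub>1 @ u\<^sub>2 @ u\<^sub>3" and "w \<noteq> []"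
    and rel: "\<forall>x\<in>{u\<^sub>1, u\<^sub>2, u\<^sub>3}. \<forall>y\<in>{u\<^sub>1, u\<^sub>2, u\<^sub>3}. x = y \<or> x = \<theta> y"
    using assms(2) unfolding pseudo_cube_def by blast
  have u21: "u\<^sub>2 = u\<^sub>1 \<or> u\<^sub>2 = \<theta> u\<^sub>1" and u31: "u\<^sub>3 = u\<^sub>1 \<or> u\<^sub>3 = \<theta> u\<^sub>1"
    and u32: "u\<^sub>3 = u\<^sub>2 \<or> u\<^sub>3 = \<theta> u\<^sub>2"
    using rel by auto
  have "length u\<^sub>2 = length u\<^sub>1" "length u\<^sub>3 = length u\<^sub>1"
    using u21 u31 by (auto simp: letterwise)
  with \<open>w \<noteq> []\<close> w have ne: "u\<^sub>1 \<noteq> []" "u\<^sub>2 \<noteq> []" by auto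
  have "u\<^sub>2 \<noteq> \<theta> u\<^sub>1"
  proof
    assume "u\<^sub>2 = \<theta> u\<^sub>1"
    then have "w = butlast u\<^sub>1 @ last u\<^sub>1 # g (last u\<^sub>1) # rev (map g (butlast u\<^sub>1)) @ u\<^sub>3"
      using w ne(1) append_rev_map_eq_reflected_pair by (simp add: letterwise)
    with no_pair show False by blast
  qed
  moreover have "u\<^sub>3 \<noteq> \<theta> u\<^sub>2"
  proof
    assume "u\<^sub>3 = \<theta> u\<^sub>2"
    then have "w = (u\<^sub>1 @ butlast u\<^sub>2) @ last u\<^sub>2 # g (last u\<^sub>2) # rev (map g (butlast u\<^sub>2))"
      using w ne(2) append_rev_map_eq_reflected_pair[of u\<^sub>2 g "[]"] by (simp add: letterwise)
    with no_pair show False by blast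
  qed
  ultimately have "u\<^sub>2 = u\<^sub>1" "u\<^sub>3 = u\<^sub>1" using u21 u32 by auto
  with w ne(1) show ?thesis by blast
qed

lemma map_upt_no_reflected_pair:
  assumes "\<And>n. w n = c \<longleftrightarrow> even n" and "g c = c" and "\<And>x. g (g x) = x"
  shows "map w [i..<j] \<noteq> p @ x # g x # q"
proof
  assume eq: "map w [i..<j] = p @ x # g x # q"
  let ?n = "length p"
  have "Suc ?n < j - i" using arg_cong[OF eq, of length] by simp
  moreover have "map w [i..<j] ! ?n = x" "map w [i..<j] ! Suc ?n = g x"
    by (simp_all add: eq nth_append)
  ultimately have "w (i + ?n) = x" "w (i + Suc ?n) = g x" by simp_all
  moreover have "g x = c \<longleftrightarrow> x = c" using assms(2,3) by metis
  ultimately have "even (i + ?n) \<longleftrightarrow> x = c" "even (i + Suc ?n) \<longleftrightarrow> x = c"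
    using assms(1)[of "i + ?n"] assms(1)[of "i + Suc ?n"] by simp_all
  then show False by simp
qed

definition interleave_thue_morse :: "'a \<Rightarrow> 'a \<Rightarrow> 'a \<Rightarrow> nat \<Rightarrow> 'a" where
  "interleave_thue_morse c a b n = (if even n then c else if thue_morse (n div 2) then a else b)"

lemma interleave_thue_morse_eq_iff:
  assumes "a \<noteq> c" and "b \<noteq> c"
  shows "interleave_thue_morse c a b n = c \<longleftrightarrow> even n"
  using assms by (simp add: interleave_thue_morse_def)

lemma interleave_thue_morse_cube_free:
  assumes "a \<noteq> b" and "a \<noteq> c" and "b \<noteq> c"
  shows "\<not> cube_at (interleave_thue_morse c a b) i k"
proof
  let ?w = "interleave_thue_morse c a b"
  assume cube: "cube_at ?w i k"
  then have "0 < k" by (simp add: cube_at_def)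
  then have "?w i = ?w (i + k)" using cube_at_periodic[OF cube, of i] by simp
  then have "even k"
    using interleave_thue_morse_eq_iff[OF assms(2,3)] by (metis even_add)
  then obtain m where k: "k = 2 * m" by blast
  have "cube_at thue_morse (i div 2) m"
    unfolding cube_at_def
  proof (intro conjI allI impI)
    show "0 < m" using \<open>0 < k\<close> k by simp
    fix r assume "r < 2 * m"
    define q where "q = i div 2 + r"
    have "i \<le> 2 * q + 1" "2 * q + 1 < i + 2 * k"
      using \<open>r < 2 * m\<close> k unfolding q_def by presburger+
    then have "?w (2 * q + 1) = ?w (2 * q + 1 + k)" by (rule cube_at_periodic[OF cube])
    also have "2 * q + 1 + k = 2 * (q + m) + 1" using k by simp
    finally have "?w (2 * q + 1) = ?w (2 * (q + m) + 1)" .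
    with assms(1) show "thue_morse (i div 2 + r) = thue_morse (i div 2 + r + m)"
      unfolding q_def interleave_thue_morse_def by (auto split: if_splits)
  qed
  then show False by (simp add: thue_morse_cube_free)
qed

theorem mainTheorem11:
  fixes \<theta> :: "'a list \<Rightarrow> 'a list"
  assumes "card (UNIV :: 'a set) = 3"
    and "antimorphic_involution \<theta>"
  shows "\<exists>w :: nat \<Rightarrow> 'a. pseudo_cube_free_inf \<theta> w"
proof -
  obtain g where letterwise: "\<And>v. \<theta> v = rev (map g v)" and involutive: "\<And>x. g (g x) = x"
    using antimorphic_involution_letterwise[OF assms(2)] by blast
  have "finite (UNIV :: 'a set)" using assms(1) card.infinite by fastforce
  then obtain c where "g c = c"
    using involution_fixed_point_if_odd_card[of UNIV g] assms(1) involutive by auto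
  have "card (UNIV - {c}) = 2" using assms(1) \<open>finite UNIV\<close> by simp
  then obtain a b where "a \<noteq> b" and ab: "UNIV - {c} = {a, b}" unfolding card_2_iff by blast
  have "a \<in> UNIV - {c}" "b \<in> UNIV - {c}" unfolding ab by simp_all
  then have "a \<noteq> c" "b \<noteq> c" by simp_all
  let ?w = "interleave_thue_morse c a b"
  have "\<not> pseudo_cube \<theta> (map ?w [i..<j])" for i j
  proof
    assume pseudo_cube: "pseudo_cube \<theta> (map ?w [i..<j])"
    have "map ?w [i..<j] \<noteq> p @ x # g x # q" for p x q
      using interleave_thue_morse_eq_iff[OF \<open>a \<noteq> c\<close> \<open>b \<noteq> c\<close>] \<open>g c = c\<close> involutive
      by (rule map_upt_no_reflected_pair)
    then obtain u where "u \<noteq> []" "map ?w [i..<j] = u @ u @ u"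
      using pseudo_cube_is_cube[OF letterwise pseudo_cube] by blast
    then have "cube_at ?w i (length u)" by (intro cube_at_of_map_upt)
    with interleave_thue_morse_cube_free[OF \<open>a \<noteq> b\<close> \<open>a \<noteq> c\<close> \<open>b \<noteq> c\<close>] show False
      by blast
  qed
  then show ?thesis unfolding pseudo_cube_free_inf_def by blast
qed

end
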